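(* Let $p>3$ be prime, $t\in\{1,3,p,3p\}$, and $1\le r\le 3p-1$ with $\gcd(r,3p)=1$. Then $\mathcal{S}(p,r,t)=p$ if $r\equiv 2\pmod 3$ and $|r|_p$ is odd, and $\mathcal{S}(p,r,t)=0$ otherwise.
   Context: $|r|_m$ is the multiplicative order of $r$ modulo $m$ (with $|r|_1=1$). $S_k(x):=1+x+\cdots+x^{k-1}$, $S_0:=0$. For $m\ge1$ with $\gcd(r,m)=1$, $\kappa(m,r,t):=\dfrac{m|r|_m}{\gcd(m,\,tS_{|r|_m}(r))}$. For $d\in\{1,3,p,3p\}$, $\Lambda(d,r,t):=\{\ell>0:\ \ell \text{ divides } \frac{|r|_{3p}}{\gcd(\kappa(d,r,t),|r|_{3p})}\text{ and }\gcd(r^{\ell\kappa(d,r,t)}-1,3p)=d\}$, and $\mathcal{S}(d,r,t):=\sum_{\ell\in\Lambda(d,r,t)} d\,\phi\!\left(\frac{|r|_{3p}}{\ell\gcd(\kappa(d,r,t),|r|_{3p})}\right)$, with $\phi$ Euler's function. *)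

theory Defs
  imports "HOL-Number_Theory.Number_Theory"
begin

definition Sgeom :: "nat \<Rightarrow> nat \<Rightarrow> nat" where
  "Sgeom k x = (\<Sum>i<k. x ^ i)"

text \<open>kappa(m,r,t) = m |r|_m / gcd(m, t S_{|r|_m}(r)); ord is the multiplicative order.\<close>
definition kappa :: "nat \<Rightarrow> nat \<Rightarrow> nat \<Rightarrow> nat" where
  "kappa m r t = (m * ord m r) div gcd m (t * Sgeom (ord m r) r)"

definition Lambda :: "nat \<Rightarrow> nat \<Rightarrow> nat \<Rightarrow> nat \<Rightarrow> nat set" where
  "Lambda p d r t = {l. l > 0 \<and>
      l dvd (ord (3*p) r div gcd (kappa d r t) (ord (3*p) r)) \<and>
      gcd (r ^ (l * kappa d r t) - 1) (3*p) = d}"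

definition Ssum :: "nat \<Rightarrow> nat \<Rightarrow> nat \<Rightarrow> nat \<Rightarrow> nat" where
  "Ssum p d r t = (\<Sum>l\<in>Lambda p d r t.
      d * totient (ord (3*p) r div (l * gcd (kappa d r t) (ord (3*p) r))))"

end

theory Submission
  imports Defs
begin

(* For a prime p, kappa(p,r,t) equals |r|_p, except when |r|_p = 1 and p does not divide t,
   where it equals p; either way |r|_p divides kappa and gcd(kappa, |r|_3p) = |r|_p.
   Since gcd(m, 3p) = p means that p divides m but 3 does not, l lies in Lambda(p,r,t)
   exactly when l divides |r|_3p / |r|_p and |r|_3 does not divide l kappa.  This never
   happens if r = 1 (mod 3), where |r|_3 = 1, nor if |r|_p is even, where kappa is even
   and |r|_3 = 2.  Otherwise |r|_3p = 2 |r|_p and kappa is odd, so Lambda = {1} and the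
   sum is p phi(2) = p. *)

lemma Sgeom_geometric:
  fixes x :: nat
  assumes "x \<ge> 1"
  shows "(x - 1) * Sgeom k x = x ^ k - 1"
proof -
  have "int ((x - 1) * Sgeom k x) = (int x - 1) * (\<Sum>i<k. int x ^ i)"
    using assms by (simp add: Sgeom_def)
  also have "\<dots> = int (x ^ k - 1)"
    using assms by (simp add: power_diff_1_eq)
  finally show ?thesis
    by (simp only: of_nat_eq_iff)
qed

lemma dvd_power_minus_one_iff_ord_dvd:
  fixes r :: nat
  assumes "r \<ge> 1"
  shows "m dvd r ^ k - 1 \<longleftrightarrow> ord m r dvd k"
  using assms ord_divides[of r k m] by (simp add: cong_altdef_nat)

lemma kappa_prime_modulus:
  fixes p r t :: nat
  assumes "prime p" and "coprime r p"
  shows "kappa p r t = (if ord p r = 1 \<and> \<not> p dvd t then p else ord p r)"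
proof -
  define q where "q = ord p r"
  have "r \<noteq> 0"
    using assms by (intro notI) simp
  then have "r \<ge> 1"
    by simp
  have p_dvd_iff: "p dvd t * Sgeom q r \<longleftrightarrow> \<not> (q = 1 \<and> \<not> p dvd t)"
  proof (cases "q = 1")
    case True
    then show ?thesis
      by (simp add: Sgeom_def)
  next
    case False
    have "p dvd r ^ q - 1"
      using dvd_power_minus_one_iff_ord_dvd[OF \<open>r \<ge> 1\<close>, of p q] by (simp add: q_def)
    then have "p dvd (r - 1) * Sgeom q r"
      by (simp only: Sgeom_geometric[OF \<open>r \<ge> 1\<close>])
    moreover have "\<not> p dvd r - 1"
      using False dvd_power_minus_one_iff_ord_dvd[OF \<open>r \<ge> 1\<close>, of p 1] by (simp add: q_def)
    ultimately show ?thesis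
      using False assms(1) prime_dvd_mult_iff by blast
  qed
  have "gcd p (t * Sgeom q r) = (if q = 1 \<and> \<not> p dvd t then 1 else p)"
  proof (cases "q = 1 \<and> \<not> p dvd t")
    case True
    then have "coprime p (t * Sgeom q r)"
      using assms(1) p_dvd_iff prime_imp_coprime by blast
    with True show ?thesis
      by simp
  next
    case False
    with p_dvd_iff show ?thesis
      by (auto simp: gcd_nat.absorb1)
  qed
  then show ?thesis
    using prime_gt_0_nat[OF assms(1)] by (simp add: kappa_def q_def[symmetric])
qed

lemma gcd_prime_mult_eq_iff:
  fixes a p m :: nat
  assumes "prime a" and "\<not> a dvd p"
  shows "gcd m (a * p) = p \<longleftrightarrow> p dvd m \<and> \<not> a dvd m"
proof
  assume "gcd m (a * p) = p"
  then show "p dvd m \<and> \<not> a dvd m"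
    using assms(2) by (metis gcd_dvd1 gcd_greatest dvd_triv_left)
next
  assume "p dvd m \<and> \<not> a dvd m"
  then have "p dvd gcd m (a * p)" and "\<not> a dvd gcd m (a * p)"
    by (simp, meson dvd_trans gcd_dvd1)
  moreover from this(2) have "coprime (gcd m (a * p)) a"
    using assms(1) prime_imp_coprime coprime_commute by blast
  then have "gcd m (a * p) dvd p"
    using coprime_dvd_mult_right_iff gcd_dvd2 by blast
  ultimately show "gcd m (a * p) = p"
    by (simp add: dvd_antisym)
qed

lemma gcd_power_minus_one_eq_iff_ord_dvd:
  fixes a p r k :: nat
  assumes "prime a" and "\<not> a dvd p" and "r \<ge> 1"
  shows "gcd (r ^ k - 1) (a * p) = p \<longleftrightarrow> ord p r dvd k \<and> \<not> ord a r dvd k"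
  using gcd_prime_mult_eq_iff[OF assms(1,2)] dvd_power_minus_one_iff_ord_dvd[OF assms(3)]
  by simp

lemma ord_3_eq:
  fixes r :: nat
  assumes "coprime r 3"
  shows "ord 3 r = (if r mod 3 = 2 then 2 else 1)"
proof -
  have "\<not> 3 dvd r"
    using assms coprime_absorb_right[of 3 r] by auto
  then have "r mod 3 = 1 \<or> r mod 3 = 2"
    by presburger
  then consider "r mod 3 = 1" | "r mod 3 = 2"
    by blast
  then show ?thesis
  proof cases
    case 1
    then show ?thesis
      using ord_eq_Suc_0_iff[of 3 r] by (simp add: cong_def)
  next
    case 2
    then have "[r\<^sup>2 = 2\<^sup>2] (mod 3)"
      by (metis cong_pow cong_def mod_mod_trivial)
    with 2 show ?thesis
      using ord_eq_2_iff[of 3 r] by (simp add: cong_def)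
  qed
qed

lemma not_3_dvd_prime_gt_3:
  fixes p :: nat
  assumes "prime p" and "p > 3"
  shows "\<not> 3 dvd p"
  using assms unfolding prime_nat_iff by force

lemma ord_3p_eq_lcm:
  fixes p r :: nat
  assumes "prime p" and "p > 3"
  shows "ord (3 * p) r = lcm (ord 3 r) (ord p r)"
proof -
  have "coprime 3 p"
    using assms by (simp add: not_3_dvd_prime_gt_3 prime_imp_coprime)
  then show ?thesis
    by (rule ord_modulus_mult_coprime)
qed

lemma gcd_kappa_ord_3p:
  fixes p r t :: nat
  assumes "prime p" and "p > 3" and "coprime r (3 * p)"
  shows "gcd (kappa p r t) (ord (3 * p) r) = ord p r"
proof (cases "ord p r = 1 \<and> \<not> p dvd t")
  case True
  have "ord 3 r \<le> 2" and "ord 3 r > 0"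
    using assms(3) ord_3_eq[of r] by auto
  with assms(2) have "\<not> p dvd ord 3 r"
    by (auto dest: dvd_imp_le)
  then have "coprime p (ord 3 r)"
    using assms(1) prime_imp_coprime by blast
  with True show ?thesis
    using assms kappa_prime_modulus[of p r t] ord_3p_eq_lcm[of p r] by simp
next
  case False
  then show ?thesis
    using assms kappa_prime_modulus[of p r t] ord_3p_eq_lcm[of p r] by (simp add: gcd_nat.absorb1)
qed

lemma ord_3p_eq_double:
  fixes p r :: nat
  assumes "prime p" and "p > 3" and "coprime r (3 * p)"
    and "r mod 3 = 2" and "odd (ord p r)"
  shows "ord (3 * p) r = 2 * ord p r"
proof -
  have "coprime 2 (ord p r)"
    using assms(5) by simp
  then show ?thesis
    using assms ord_3p_eq_lcm[of p r] ord_3_eq[of r] by (simp add: lcm_coprime)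
qed

lemma Lambda_p_eq:
  fixes p r t :: nat
  assumes "prime p" and "p > 3" and "coprime r (3 * p)"
  shows "Lambda p p r t = (if r mod 3 = 2 \<and> odd (ord p r) then {1} else {})"
proof -
  define q where "q = ord p r"
  define \<kappa> where "\<kappa> = kappa p r t"
  have "r \<noteq> 0"
    using assms(1,3) by (intro notI) simp
  then have "r \<ge> 1"
    by simp
  have "q > 0"
    using assms(3) by (simp add: q_def ord_eq_0 coprime_commute)
  have kappa_cases: "\<kappa> = q \<or> (\<kappa> = p \<and> q = 1)"
    using assms(1,3) kappa_prime_modulus[of p r t] by (auto simp: \<kappa>_def q_def)
  then have "q dvd \<kappa>"
    by auto
  have Lambda_iff: "l \<in> Lambda p p r t \<longleftrightarrow> 0 < l \<and> l dvd ord (3 * p) r div q \<and> \<not> ord 3 r dvd l * \<kappa>"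
    for l
  proof -
    have "q dvd l * \<kappa>"
      using \<open>q dvd \<kappa>\<close> by simp
    then have "gcd (r ^ (l * \<kappa>) - 1) (3 * p) = p \<longleftrightarrow> \<not> ord 3 r dvd l * \<kappa>"
      using gcd_power_minus_one_eq_iff_ord_dvd[OF _ not_3_dvd_prime_gt_3[OF assms(1,2)] \<open>r \<ge> 1\<close>]
      by (simp add: q_def)
    then show ?thesis
      using gcd_kappa_ord_3p[OF assms] by (simp add: Lambda_def \<kappa>_def q_def)
  qed
  show ?thesis
  proof (cases "r mod 3 = 2 \<and> odd q")
    case True
    have "odd \<kappa>"
      using kappa_cases True prime_odd_nat[OF assms(1)] assms(2) by auto
    moreover have "ord 3 r = 2"
      using True assms(3) ord_3_eq[of r] by simp
    moreover have "ord (3 * p) r div q = 2"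
      using True assms \<open>q > 0\<close> ord_3p_eq_double[of p r] by (simp add: q_def)
    moreover have "0 < l \<and> l dvd 2 \<and> odd l \<longleftrightarrow> l = 1" for l :: nat
      by (cases "l = 2") (auto dest: dvd_imp_le)
    ultimately have "l \<in> Lambda p p r t \<longleftrightarrow> l = 1" for l
      unfolding Lambda_iff by auto
    with True show ?thesis
      by (auto simp: q_def)
  next
    case False
    have "ord 3 r dvd \<kappa>"
    proof (cases "r mod 3 = 2")
      case True
      with False have "even q"
        by simp
      with kappa_cases have "even \<kappa>"
        by auto
      with True show ?thesis
        using assms(3) ord_3_eq[of r] by simp
    next
      case False
      then show ?thesis
        using assms(3) ord_3_eq[of r] by simp
    qed
    with False show ?thesis
      using Lambda_iff by (auto simp: q_def)
  qed
qed

theorem lemma5p7: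
  fixes p r t :: nat
  assumes "prime p" and "p > 3"
    and "t \<in> {1, 3, p, 3*p}"
    and "1 \<le> r" and "r \<le> 3*p - 1" and "coprime r (3*p)"
  shows "Ssum p p r t = (if r mod 3 = 2 \<and> odd (ord p r) then p else 0)"
proof (cases "r mod 3 = 2 \<and> odd (ord p r)")
  case True
  have "ord p r > 0"
    using assms(6) by (simp add: ord_eq_0 coprime_commute)
  have "Lambda p p r t = {1}"
    using True by (simp add: Lambda_p_eq[OF assms(1,2,6)])
  then have "Ssum p p r t = p * totient (ord (3 * p) r div gcd (kappa p r t) (ord (3 * p) r))"
    by (simp add: Ssum_def)
  also have "\<dots> = p * totient 2"
    using True \<open>ord p r > 0\<close> gcd_kappa_ord_3p[OF assms(1,2,6)] ord_3p_eq_double[OF assms(1,2,6)]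
    by simp
  finally show ?thesis
    using True by (simp add: totient_prime)
next
  case False
  then have "Lambda p p r t = {}"
    by (simp add: Lambda_p_eq[OF assms(1,2,6)])
  with False show ?thesis
    by (auto simp: Ssum_def)
qed

end
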